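(* Assume Conditions A, B, C with $k_1=0$ (so $H(q,X)=H(X)$), let $0<T<\infty$, let $\chi:(0,T)\to\mathbb{R}$ be bounded continuous with $\alpha=\sup_{(0,T)}|\chi|$, and let $Z$ be a non-increasing continuous function from (a set containing) $[0,\infty)$ to $[0,\infty)$. Set $M=\max(\Lambda^{\sup},1)$ and $\bar E=2(1+T)M$. Fix $z\in\mathbb{R}^n$, $r=|x-z|$. Then for every $b>0$ the function $w(x,t)=\alpha t+b(1+t)e^{r^2/\bar E}$ is a (classical, hence viscosity) super-solution of $H(D^2w+Z(w)Dw\otimes Dw)+\chi(t)-w_t\le0$ in $\mathbb{R}^n\times(0,T)$.
   Context: $S^{n\times n}$ denotes the real symmetric matrices with the usual order, $I$ the identity, $O$ the zero matrix, $(e\otimes e)_{ij}=e_ie_j$, $(p\otimes q)_{ij}=p_iq_j$. $H:\mathbb{R}^n\times S^{n\times n}\to\mathbb{R}$ is continuous and satisfies: Condition A: $H(q,X)\le H(q,Y)$ when $X\le Y$ and $H(q,O)=0$. Condition B: there is $k_1\ge0$ with $H(\theta q,X)=|\theta|^{k_1}H(q,X)$ for all $\theta\in\mathbb{R}$ and $H(q,\theta X)=\theta H(q,X)$ for $\theta>0$. Condition C: $\max_{|e|=1}H(e,-I)<0<\min_{|e|=1}H(e,I)$ and $\Lambda^{\sup}:=\sup_{\lambda\in\mathbb{R}}\max_{|e|=1}H(e,\lambda e\otimes e+I)<\infty$. *)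

theory Defs
  imports "HOL-Analysis.Analysis"
begin

definition sym_mat :: "real^'n^'n \<Rightarrow> bool" where
  "sym_mat X \<longleftrightarrow> transpose X = X"

definition mat_le :: "real^'n^'n \<Rightarrow> real^'n^'n \<Rightarrow> bool" where
  "mat_le X Y \<longleftrightarrow> (\<forall>v. 0 \<le> v \<bullet> ((Y - X) *v v))"

definition outer :: "real^'n \<Rightarrow> real^'n \<Rightarrow> real^'n^'n" where
  "outer p q = (\<chi> i j. p $ i * q $ j)"

text \<open>|theta|^k with the convention |theta|^0 = 1 (also for theta = 0).\<close>
definition abs_pow :: "real \<Rightarrow> real \<Rightarrow> real" where
  "abs_pow \<theta> k = (if k = 0 then 1 else \<bar>\<theta>\<bar> powr k)"

definition condA :: "(real^'n \<Rightarrow> real^'n^'n \<Rightarrow> real) \<Rightarrow> bool" where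
  "condA H \<longleftrightarrow>
     (\<forall>q X Y. sym_mat X \<longrightarrow> sym_mat Y \<longrightarrow> mat_le X Y \<longrightarrow> H q X \<le> H q Y) \<and>
     (\<forall>q. H q 0 = 0)"

definition condB :: "real \<Rightarrow> (real^'n \<Rightarrow> real^'n^'n \<Rightarrow> real) \<Rightarrow> bool" where
  "condB k1 H \<longleftrightarrow> 0 \<le> k1 \<and>
     (\<forall>\<theta> q X. sym_mat X \<longrightarrow> H (\<theta> *\<^sub>R q) X = abs_pow \<theta> k1 * H q X) \<and>
     (\<forall>\<theta> q X. sym_mat X \<longrightarrow> \<theta> > 0 \<longrightarrow> H q (\<theta> *\<^sub>R X) = \<theta> * H q X)"

definition Lambda_sup :: "(real^'n \<Rightarrow> real^'n^'n \<Rightarrow> real) \<Rightarrow> real" where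
  "Lambda_sup H = Sup {H e (l *\<^sub>R outer e e + mat 1) | l e. norm e = 1}"

definition condC :: "(real^'n \<Rightarrow> real^'n^'n \<Rightarrow> real) \<Rightarrow> bool" where
  "condC H \<longleftrightarrow>
     (SUP e\<in>sphere 0 1. H e (- mat 1)) < 0 \<and> 0 < (INF e\<in>sphere 0 1. H e (mat 1)) \<and>
     bdd_above {H e (l *\<^sub>R outer e e + mat 1) | l e. norm e = 1}"

definition classical_supersol ::
  "(real^'n \<Rightarrow> real^'n^'n \<Rightarrow> real) \<Rightarrow> (real \<Rightarrow> real) \<Rightarrow> (real \<Rightarrow> real) \<Rightarrow> real
     \<Rightarrow> (real^'n \<Rightarrow> real \<Rightarrow> real) \<Rightarrow> bool" where
  "classical_supersol H Z chi T w \<longleftrightarrow>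
    (\<forall>x t. 0 < t \<and> t < T \<longrightarrow>
      (\<exists>Dx X wt.
        (\<forall>y. ((\<lambda>y'. w y' t) has_derivative (\<lambda>h. Dx y \<bullet> h)) (at y)) \<and>
        (Dx has_derivative (\<lambda>h. X *v h)) (at x) \<and>
        ((\<lambda>s. w x s) has_real_derivative wt) (at t) \<and>
        H (Dx x) (X + Z (w x t) *\<^sub>R outer (Dx x) (Dx x)) + chi t - wt \<le> 0))"

end

theory Submission imports Defs begin

text \<open>With \<open>k\<^sub>1 = 0\<close> the operator ignores the gradient, and for the barrier
  \<open>w = \<alpha> t + b (1 + t) exp(r\<^sup>2/E)\<close> the matrix \<open>D\<^sup>2w + Z(w) Dw \<otimes> Dw\<close> is a positive
  multiple \<open>c (I + \<lambda> e \<otimes> e)\<close> of a rank-one perturbation of the identity, where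
  \<open>e\<close> is the radial unit vector and \<open>c = 2 b (1 + t) exp(r\<^sup>2/E) / E\<close>. Positive homogeneity
  and the definition of \<open>\<Lambda>\<^sup>s\<^sup>u\<^sup>p\<close> give \<open>H \<le> c \<Lambda>\<^sup>s\<^sup>u\<^sup>p\<close>, and this is at most
  \<open>b exp(r\<^sup>2/E) = w\<^sub>t - \<alpha>\<close> once \<open>E \<ge> 2 (1 + T) \<Lambda>\<^sup>s\<^sup>u\<^sup>p\<close>. Since \<open>\<Lambda>\<^sup>s\<^sup>u\<^sup>p\<close> is a
  supremum over all \<open>\<lambda>\<close>, nothing about \<open>Z\<close> is needed.\<close>

lemma outer_mult_vec: "outer p q *v h = (q \<bullet> h) *\<^sub>R p"
  by (simp add: vec_eq_iff outer_def matrix_vector_mult_def inner_vec_def sum_distrib_left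
      mult.commute mult.left_commute)

lemma outer_scaleR: "outer (a *\<^sub>R p) (c *\<^sub>R q) = (a * c) *\<^sub>R outer p q"
  by (simp add: vec_eq_iff outer_def)

lemma scaleR_matrix_vector_mult: "(c *\<^sub>R (A::real^'n^'m)) *v h = c *\<^sub>R (A *v h)"
  by (simp add: vec_eq_iff matrix_vector_mult_def sum_distrib_left mult.assoc)

lemma sym_mat_scaleR: "sym_mat X \<Longrightarrow> sym_mat (c *\<^sub>R X)"
  by (simp add: sym_mat_def transpose_def vec_eq_iff)

lemma sym_mat_outer_plus_id: "sym_mat (l *\<^sub>R outer e e + mat 1)"
  by (simp add: sym_mat_def vec_eq_iff transpose_def outer_def mat_def mult.commute)

lemma outer_self_eq_unit:
  fixes d :: "real^'n"
  obtains e where "norm e = 1" and "outer d d = (norm d)\<^sup>2 *\<^sub>R outer e e"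
proof (cases "d = 0")
  case True
  then show ?thesis
    using that[of "axis undefined 1"] by (simp add: norm_axis_1 outer_def vec_eq_iff)
next
  case False
  define e where "e = (1 / norm d) *\<^sub>R d"
  have "d = norm d *\<^sub>R e" using False by (simp add: e_def)
  then have "outer d d = (norm d)\<^sup>2 *\<^sub>R outer e e"
    by (metis outer_scaleR power2_eq_square)
  moreover have "norm e = 1" using False by (simp add: e_def)
  ultimately show ?thesis using that by blast
qed

lemma condB_0_gradient_independent:
  assumes "condB 0 H" and "sym_mat X"
  shows "H q X = H p X"
proof -
  \<comment> \<open>\<open>abs_pow 0 0 = 1\<close>, so the homogeneity of degree 0 may be used with \<open>\<theta> = 0\<close>.\<close>
  have "H (\<theta> *\<^sub>R q) X = H q X" for \<theta> q
    using assms unfolding condB_def abs_pow_def by simp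
  from this[of 0 q] this[of 0 p] show ?thesis by simp
qed

lemma condC_le_Lambda_sup:
  assumes "condC H" and "norm e = 1"
  shows "H e (l *\<^sub>R outer e e + mat 1) \<le> Lambda_sup H"
  unfolding Lambda_sup_def
  using assms by (intro cSup_upper) (auto simp: condC_def)

lemma H_rank_one_perturbation_le:
  assumes B: "condB 0 H" and C: "condC H" and "0 < c"
  shows "H q (c *\<^sub>R (\<mu> *\<^sub>R outer d d + mat 1)) \<le> c * Lambda_sup H"
proof -
  obtain e where e: "norm e = 1" and d: "outer d d = (norm d)\<^sup>2 *\<^sub>R outer e e"
    by (rule outer_self_eq_unit)
  let ?l = "\<mu> * (norm d)\<^sup>2"
  have "H q (c *\<^sub>R (\<mu> *\<^sub>R outer d d + mat 1)) = H e (c *\<^sub>R (?l *\<^sub>R outer e e + mat 1))"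
    using condB_0_gradient_independent[OF B sym_mat_scaleR[OF sym_mat_outer_plus_id]] d
    by simp
  also have "\<dots> = c * H e (?l *\<^sub>R outer e e + mat 1)"
    using B \<open>0 < c\<close> sym_mat_outer_plus_id unfolding condB_def by blast
  also have "\<dots> \<le> c * Lambda_sup H"
    using condC_le_Lambda_sup[OF C e] \<open>0 < c\<close> by simp
  finally show ?thesis .
qed

lemma has_derivative_exp_norm_sq:
  fixes z :: "'a::real_inner"
  assumes "E \<noteq> 0"
  shows "((\<lambda>y. exp ((norm (y - z))\<^sup>2 / E)) has_derivative
     (\<lambda>h. (exp ((norm (y - z))\<^sup>2 / E) * (2 / E)) *\<^sub>R (y - z) \<bullet> h)) (at y)"
  unfolding power2_norm_eq_inner
  apply (rule has_derivative_eq_rhs)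
   apply (rule derivative_eq_intros refl | simp add: assms)+
  using assms by (simp add: fun_eq_iff field_simps inner_commute inner_diff_right inner_diff_left)

lemma has_derivative_exp_norm_sq_gradient:
  fixes z x :: "real^'n"
  assumes "E \<noteq> 0"
  shows "((\<lambda>y. (k * exp ((norm (y - z))\<^sup>2 / E)) *\<^sub>R (y - z)) has_derivative
     (\<lambda>h. ((k * exp ((norm (x - z))\<^sup>2 / E)) *\<^sub>R mat 1
        + (k * exp ((norm (x - z))\<^sup>2 / E) * (2 / E)) *\<^sub>R outer (x - z) (x - z)) *v h)) (at x)"
  apply (rule has_derivative_eq_rhs)
   apply (rule has_derivative_scaleR[OF has_derivative_mult_right[OF has_derivative_exp_norm_sq[OF assms]]])
   apply (rule derivative_eq_intros refl)+
  apply (simp only: fun_eq_iff matrix_vector_mult_add_rdistrib scaleR_matrix_vector_mult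
      outer_mult_vec matrix_vector_mul_lid)
  by (simp add: algebra_simps inner_commute inner_diff_right scaleR_diff_right)

lemma mult_le_of_larger_factor_le:
  fixes s S L E :: real
  assumes "0 \<le> s" and "s \<le> S" and "S * L \<le> E" and "0 \<le> E"
  shows "s * L \<le> E"
proof (cases "0 \<le> L")
  case True
  then have "s * L \<le> S * L"
    using assms(2) by (simp add: mult_right_mono)
  with assms(3) show ?thesis by linarith
next
  case False
  then have "s * L \<le> 0"
    using assms(1) by (intro mult_nonneg_nonpos) auto
  with assms(4) show ?thesis by linarith
qed

lemma exp_barrier_classical_supersol:
  fixes H :: "real^'n \<Rightarrow> real^'n^'n \<Rightarrow> real" and z :: "real^'n"
  assumes B: "condB 0 H" and C: "condC H"
    and chi_le: "\<And>t. 0 < t \<Longrightarrow> t < T \<Longrightarrow> chi t \<le> \<alpha>"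
    and b: "0 < b" and E: "0 < E" and E_ge: "2 * (1 + T) * Lambda_sup H \<le> E"
  shows "classical_supersol H Z chi T (\<lambda>x t. \<alpha> * t + b * (1 + t) * exp ((norm (x - z))\<^sup>2 / E))"
  unfolding classical_supersol_def
proof (intro allI impI)
  fix x :: "real^'n" and t :: real
  assume t: "0 < t \<and> t < T"
  let ?w = "\<lambda>x t. \<alpha> * t + b * (1 + t) * exp ((norm (x - z))\<^sup>2 / E)"
  define ex where "ex = exp ((norm (x - z))\<^sup>2 / E)"
  define k where "k = b * (1 + t) * (2 / E)"
  define Dx where "Dx = (\<lambda>y. (k * exp ((norm (y - z))\<^sup>2 / E)) *\<^sub>R (y - z))"
  define X where "X = (k * ex) *\<^sub>R mat 1 + (k * ex * (2 / E)) *\<^sub>R outer (x - z) (x - z)"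
  define wt where "wt = \<alpha> + b * ex"
  have scale_pos: "0 < k * ex"
    using b t E by (simp add: k_def ex_def)
  have gradient: "((\<lambda>y'. ?w y' t) has_derivative (\<lambda>h. Dx y \<bullet> h)) (at y)" for y
    apply (rule has_derivative_eq_rhs)
     apply (rule has_derivative_add[OF has_derivative_const
          has_derivative_mult_right[OF has_derivative_exp_norm_sq]])
    using E by (auto simp: fun_eq_iff Dx_def k_def algebra_simps)
  have hessian: "(Dx has_derivative (\<lambda>h. X *v h)) (at x)"
    unfolding Dx_def X_def ex_def using E by (intro has_derivative_exp_norm_sq_gradient) simp
  have time_derivative: "((\<lambda>s. ?w x s) has_real_derivative wt) (at t)"
    unfolding wt_def ex_def by (auto intro!: derivative_eq_intros)
  define \<mu> where "\<mu> = 2 / E + Z (?w x t) * (k * ex)"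
  have Dx_x: "Dx x = (k * ex) *\<^sub>R (x - z)"
    by (simp add: Dx_def ex_def)
  have "X + Z (?w x t) *\<^sub>R outer (Dx x) (Dx x) = (k * ex) *\<^sub>R (\<mu> *\<^sub>R outer (x - z) (x - z) + mat 1)"
    unfolding Dx_x X_def \<mu>_def outer_scaleR by (simp add: algebra_simps)
  then have "H (Dx x) (X + Z (?w x t) *\<^sub>R outer (Dx x) (Dx x)) \<le> (k * ex) * Lambda_sup H"
    using H_rank_one_perturbation_le[OF B C scale_pos] by simp
  also have "\<dots> = b * ex * (2 * (1 + t) * Lambda_sup H / E)"
    by (simp add: k_def)
  also have "\<dots> \<le> b * ex"
  proof -
    have "2 * (1 + t) * Lambda_sup H \<le> E"
      by (rule mult_le_of_larger_factor_le[OF _ _ E_ge]) (use t E in auto)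
    then have "2 * (1 + t) * Lambda_sup H / E \<le> 1"
      using E by simp
    moreover have "0 \<le> b * ex"
      using b by (simp add: ex_def)
    ultimately show ?thesis
      by (rule mult_left_le)
  qed
  finally have "H (Dx x) (X + Z (?w x t) *\<^sub>R outer (Dx x) (Dx x)) + chi t - wt \<le> 0"
    using chi_le[of t] t by (simp add: wt_def)
  with gradient hessian time_derivative
  show "\<exists>Dx X wt. (\<forall>y. ((\<lambda>y'. ?w y' t) has_derivative (\<lambda>h. Dx y \<bullet> h)) (at y)) \<and>
      (Dx has_derivative (\<lambda>h. X *v h)) (at x) \<and> ((\<lambda>s. ?w x s) has_real_derivative wt) (at t) \<and>
      H (Dx x) (X + Z (?w x t) *\<^sub>R outer (Dx x) (Dx x)) + chi t - wt \<le> 0"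
    by blast
qed

lemma le_SUP_abs_of_bounded:
  fixes f :: "'a \<Rightarrow> real"
  assumes "bounded (f ` S)" and "t \<in> S"
  shows "f t \<le> (SUP s\<in>S. \<bar>f s\<bar>)"
proof -
  obtain K where "\<And>s. s \<in> S \<Longrightarrow> \<bar>f s\<bar> \<le> K"
    using assms(1) unfolding bounded_real by blast
  then have "\<bar>f t\<bar> \<le> (SUP s\<in>S. \<bar>f s\<bar>)"
    using assms(2) by (intro cSUP_upper bdd_aboveI2) auto
  then show ?thesis by simp
qed

theorem mainTheorem9:
  fixes H :: "real^'n \<Rightarrow> real^'n^'n \<Rightarrow> real"
    and chi Z :: "real \<Rightarrow> real" and T b :: real and z :: "real^'n"
  assumes Hcont: "continuous_on (UNIV \<times> {X. sym_mat X}) (\<lambda>(q, X). H q X)"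
    and A: "condA H" and B: "condB 0 H" and C: "condC H"
    and T: "0 < T"
    and chi_cont: "continuous_on {0<..<T} chi"
    and chi_bdd: "bounded (chi ` {0<..<T})"
    and Z_cont: "continuous_on {0..} Z"
    and Z_mono: "\<And>s u. 0 \<le> s \<Longrightarrow> s \<le> u \<Longrightarrow> Z u \<le> Z s"
    and Z_nonneg: "\<And>s. 0 \<le> s \<Longrightarrow> 0 \<le> Z s"
    and b: "0 < b"
  shows "let \<alpha> = (SUP t\<in>{0<..<T}. \<bar>chi t\<bar>);
             M = max (Lambda_sup H) 1;
             Ebar = 2 * (1 + T) * M
         in classical_supersol H Z chi T
              (\<lambda>x t. \<alpha> * t + b * (1 + t) * exp ((norm (x - z))\<^sup>2 / Ebar))"
proof -
  have "0 < 2 * (1 + T) * max (Lambda_sup H) 1"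
    using T by simp
  moreover have "2 * (1 + T) * Lambda_sup H \<le> 2 * (1 + T) * max (Lambda_sup H) 1"
    using T by (intro mult_left_mono) auto
  moreover have "chi t \<le> (SUP t\<in>{0<..<T}. \<bar>chi t\<bar>)" if "0 < t" "t < T" for t
    using le_SUP_abs_of_bounded[OF chi_bdd] that by simp
  ultimately show ?thesis
    unfolding Let_def using exp_barrier_classical_supersol[OF B C _ b] by blast
qed

end
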